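(* Assume the hypotheses of Theorem 6: $(P_{\mathcal C})$ under Assumption A; $\{x^k\}$, $\{y^k\}$ ($y^k\in\partial h(x^k)$) well-defined bounded DCA sequences from $x^0\in\operatorname{dom}\partial h$; $f$ continuous on $\operatorname{dom}f$; $\rho_g+\rho_h>0$; $h$ differentiable with locally Lipschitz continuous gradient. Let $f^*=\lim_kf(x^k)$ and $\Psi=f+\chi_{\mathcal C}-f^*$, and suppose $\Psi$ satisfies the KL property around the set of cluster points of $\{x^k\}$ with $\varphi(t)=Mt^{1-\theta}$, i.e., there exist $M>0$, $\theta\in[0,1)$, $\eta\in(0,\infty]$ and a neighbourhood $\mathcal V$ of the set of cluster points of $\{x^k\}$ such that $\varphi'(\Psi(x))\operatorname{dist}(0,\partial^L\Psi(x))\ge1$ for all $x\in\mathcal V$ with $\Psi(x)\in(0,\eta)$. Then: (i) if $\theta=0$, $f(x^k)=f^*$ for all sufficiently large $k$; (ii) if $\theta\in(0,\tfrac12]$, there is $q\in(0,1)$ with $f(x^k)-f^*=O(q^k)$ as $k\to\infty$; (iii) if $\theta\in(\tfrac12,1)$, then $f(x^k)-f^*=O\big(k^{\frac{1}{1-2\theta}}\big)$ as $k\to\infty$.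
   Context: $\Gamma_0(\mathbb{R}^n)$ is the set of proper, lower semicontinuous, convex functions $\mathbb{R}^n\to(-\infty,\infty]$. Let $g,h\in\Gamma_0(\mathbb{R}^n)$, $\mathcal C\subseteq\mathbb R^n$ nonempty closed convex with indicator $\chi_{\mathcal C}$, and $f=g-h$ with convention $\infty-\infty=\infty$. Problem $(P_{\mathcal C})$: $\inf\{f(x):x\in\mathcal C\}$ (standard program: $\mathcal C=\mathbb R^n$). Assumption A: $g,h\in\Gamma_0(\mathbb{R}^n)$ and the solution set of $(P_{\mathcal C})$ is nonempty. DCA: given $x^0\in\operatorname{dom}\partial h$, for $k=0,1,\dots$ choose $y^k\in\partial h(x^k)$ and $x^{k+1}\in\operatorname{argmin}\{g(x)-\langle y^k,x\rangle: x\in\mathcal C\}$. Convexity moduli: $\rho_g,\rho_h\ge0$ constants with $g(z)\ge g(x)+\langle w,z-x\rangle+\frac{\rho_g}{2}\|z-x\|^2$ and $h(z)\ge h(x)+\langle v,z-x\rangle+\frac{\rho_h}{2}\|z-x\|^2$ for all $x,z\in\mathcal C$, $w\in\partial g(x)$, $v\in\partial h(x)$. Fréchet and limiting subdifferentials: $\partial^F\phi(x)=\{y:\liminf_{z\to x,z\neq x}\frac{\phi(z)-\phi(x)-\langle y,z-x\rangle}{\|z-x\|}\ge0\}$, $\partial^L\phi(x)=\{y:\exists x^j\to x,\ \phi(x^j)\to\phi(x),\ y^j\in\partial^F\phi(x^j),\ y^j\to y\}$; $\operatorname{dist}(0,S)=\inf\{\|y\|:y\in S\}$. *)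

theory Defs
  imports "HOL-Analysis.Analysis" "HOL-Library.Landau_Symbols"
begin

text \<open>Extended-real-valued functions on a Euclidean space model functions into (-inf, inf].\<close>

definition proper_fun :: "('a \<Rightarrow> ereal) \<Rightarrow> bool" where
  "proper_fun g \<longleftrightarrow> (\<forall>x. g x \<noteq> -\<infinity>) \<and> (\<exists>x. g x \<noteq> \<infinity>)"

definition lsc_fun :: "('a::topological_space \<Rightarrow> ereal) \<Rightarrow> bool" where
  "lsc_fun g \<longleftrightarrow> (\<forall>x. g x \<le> Liminf (at x) g)"

definition convex_fun :: "('a::real_vector \<Rightarrow> ereal) \<Rightarrow> bool" where
  "convex_fun g \<longleftrightarrow> convex {(x, r::real). g x \<le> ereal r}"

definition Gamma0 :: "('a::euclidean_space \<Rightarrow> ereal) set" where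
  "Gamma0 = {g. proper_fun g \<and> lsc_fun g \<and> convex_fun g}"

definition edom :: "('a \<Rightarrow> ereal) \<Rightarrow> 'a set" where
  "edom g = {x. g x < \<infinity>}"

definition csubdiff :: "('a::euclidean_space \<Rightarrow> ereal) \<Rightarrow> 'a \<Rightarrow> 'a set" where
  "csubdiff g x = {y. \<bar>g x\<bar> \<noteq> \<infinity> \<and> (\<forall>z. g z \<ge> g x + ereal (y \<bullet> (z - x)))}"

definition dom_subdiff :: "('a::euclidean_space \<Rightarrow> ereal) \<Rightarrow> 'a set" where
  "dom_subdiff g = {x. csubdiff g x \<noteq> {}}"

text \<open>DC function with the convention inf - inf = inf.\<close>
definition dcf :: "('a \<Rightarrow> ereal) \<Rightarrow> ('a \<Rightarrow> ereal) \<Rightarrow> 'a \<Rightarrow> ereal" where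
  "dcf g h x = (if g x = \<infinity> then \<infinity> else g x - h x)"

definition indicator_ext :: "'a set \<Rightarrow> 'a \<Rightarrow> ereal" where
  "indicator_ext C x = (if x \<in> C then 0 else \<infinity>)"

definition frechet_subdiff :: "('a::euclidean_space \<Rightarrow> ereal) \<Rightarrow> 'a \<Rightarrow> 'a set" where
  "frechet_subdiff \<phi> x = {y. \<bar>\<phi> x\<bar> \<noteq> \<infinity> \<and>
     Liminf (at x) (\<lambda>z. (\<phi> z - \<phi> x - ereal (y \<bullet> (z - x))) / ereal (norm (z - x))) \<ge> 0}"

definition limiting_subdiff :: "('a::euclidean_space \<Rightarrow> ereal) \<Rightarrow> 'a \<Rightarrow> 'a set" where
  "limiting_subdiff \<phi> x = {y. \<exists>xs ys. xs \<longlonglongrightarrow> x \<and> (\<lambda>j. \<phi> (xs j)) \<longlonglongrightarrow> \<phi> x \<and>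
     (\<forall>j. ys j \<in> frechet_subdiff \<phi> (xs j)) \<and> ys \<longlonglongrightarrow> y}"

text \<open>dist(0,S) = inf of norms; equals infinity for empty S.\<close>
definition dist0 :: "'a::real_normed_vector set \<Rightarrow> ereal" where
  "dist0 S = Inf ((\<lambda>y. ereal (norm y)) ` S)"

definition cluster_points :: "(nat \<Rightarrow> 'a::topological_space) \<Rightarrow> 'a set" where
  "cluster_points xs = {z. \<exists>r. strict_mono r \<and> (xs \<circ> r) \<longlonglongrightarrow> z}"

definition locally_lipschitz_fun :: "('a::metric_space \<Rightarrow> 'b::metric_space) \<Rightarrow> bool" where
  "locally_lipschitz_fun G \<longleftrightarrow>
     (\<forall>x. \<exists>r>0. \<exists>L. \<forall>u\<in>ball x r. \<forall>v\<in>ball x r. dist (G u) (G v) \<le> L * dist u v)"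

definition dca_seq :: "('a::euclidean_space \<Rightarrow> ereal) \<Rightarrow> ('a \<Rightarrow> ereal) \<Rightarrow> 'a set
     \<Rightarrow> (nat \<Rightarrow> 'a) \<Rightarrow> (nat \<Rightarrow> 'a) \<Rightarrow> bool" where
  "dca_seq g h C x y \<longleftrightarrow> x 0 \<in> dom_subdiff h \<and>
     (\<forall>k. y k \<in> csubdiff h (x k) \<and> x (Suc k) \<in> C \<and>
          (\<forall>z\<in>C. g (x (Suc k)) - ereal (y k \<bullet> x (Suc k)) \<le> g z - ereal (y k \<bullet> z)))"

end

theory Submission
  imports Defs
begin

text \<open>
  On a ball containing the bounded iterates the gradient of \<open>h\<close> is \<open>L\<close>-Lipschitz, hence
  cocoercive since \<open>h\<close> is convex. Together with the optimality of \<open>x (k+1)\<close> for the convex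
  subproblem this yields the sufficient decrease
  \<open>f (x k) - f (x (k+1)) \<ge> \<bar>\<nabla>h (x (k+1)) - \<nabla>h (x k)\<bar>\<^sup>2 / (2 L)\<close>.
  The same optimality condition makes \<open>\<nabla>h (x k) - \<nabla>h (x (k+1))\<close> a Frechet, hence limiting,
  subgradient of \<open>\<Psi>\<close> at \<open>x (k+1)\<close>, so the KL inequality turns the decrease into the recursion
  \<open>r (k+1) powr (2 \<theta>) \<le> A (r k - r (k+1))\<close> for the gap \<open>r k = f (x k) - f\<^sup>*\<close>. The three rates
  are the standard consequences of this recursion: the gap vanishes eventually for \<open>\<theta> = 0\<close>, it
  contracts by the factor \<open>A / (1 + A)\<close> once it is below 1 for \<open>\<theta> \<le> 1/2\<close>, and for \<open>\<theta> > 1/2\<close>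
  the quantity \<open>r k powr (1 - 2 \<theta>)\<close> grows at least linearly in \<open>k\<close>.
\<close>

section \<open>Rates from the KL recursion\<close>

lemma bigo_power_of_eventually_contracting:
  fixes r :: "nat \<Rightarrow> real"
  assumes q: "q > 0"
    and nonneg: "\<And>k. k \<ge> K \<Longrightarrow> 0 \<le> r k"
    and contract: "\<And>k. k \<ge> K \<Longrightarrow> r (Suc k) \<le> q * r k"
  shows "r \<in> O(\<lambda>k. q ^ k)"
proof -
  have bound: "r (K + n) \<le> r K * q ^ n" for n
  proof (induction n)
    case (Suc n)
    have "r (K + Suc n) \<le> q * r (K + n)" using contract[of "K + n"] by simp
    also have "\<dots> \<le> q * (r K * q ^ n)" using Suc q by (intro mult_left_mono) auto
    finally show ?case by (simp add: algebra_simps)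
  qed simp
  show ?thesis
  proof (rule bigoI[where c = "r K / q ^ K"])
    show "\<forall>\<^sub>F k in sequentially. norm (r k) \<le> r K / q ^ K * norm (q ^ k)"
      unfolding eventually_sequentially
    proof (intro exI allI impI)
      fix k assume "K \<le> k"
      then obtain n where k: "k = K + n" using le_Suc_ex by blast
      have "r K / q ^ K * q ^ k = r K * q ^ n" using q by (simp add: k power_add)
      then show "norm (r k) \<le> r K / q ^ K * norm (q ^ k)"
        using bound[of n] nonneg[of k] q k by simp
    qed
  qed
qed

lemma powr_neg_diff_ge:
  fixes a b \<beta> :: real
  assumes "0 < a" "a \<le> b" "\<beta> > 0"
  shows "\<beta> * b powr (-(\<beta> + 1)) * (b - a) \<le> a powr (-\<beta>) - b powr (-\<beta>)"
proof -
  define t where "t = a / b"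
  have b: "b > 0" and t: "0 < t" "t \<le> 1" using assms by (auto simp: t_def)
  have "1 - \<beta> * ln t \<le> exp (-\<beta> * ln t)" using exp_ge_add_one_self[of "-\<beta> * ln t"] by simp
  moreover have "\<beta> * ln t \<le> \<beta> * (t - 1)" using ln_le_minus_one[OF t(1)] assms by simp
  ultimately have "\<beta> * (1 - t) \<le> t powr (-\<beta>) - 1" using t by (simp add: powr_def algebra_simps)
  then have "b powr (-\<beta>) * (\<beta> * (1 - t)) \<le> b powr (-\<beta>) * (t powr (-\<beta>) - 1)"
    by (intro mult_left_mono) auto
  moreover have "b powr (-\<beta>) * (t powr (-\<beta>) - 1) = a powr (-\<beta>) - b powr (-\<beta>)"
    using b assms by (simp add: t_def powr_divide right_diff_distrib)
  moreover have "b powr (-\<beta>) * (\<beta> * (1 - t)) = \<beta> * b powr (-(\<beta> + 1)) * (b - a)"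
  proof -
    have "b powr (-(\<beta> + 1)) = b powr (-\<beta>) / b"
      using b by (simp add: powr_diff[of b "-\<beta>" 1, simplified])
    then show ?thesis using b by (simp add: t_def field_simps)
  qed
  ultimately show ?thesis by simp
qed

lemma powr_neg_increment_ge:
  fixes a b c A \<beta> :: real
  assumes ab: "0 < a" "a \<le> b" and bc: "b \<le> c" and A: "A > 0" and \<beta>: "\<beta> > 0"
    and rec: "a powr (\<beta> + 1) \<le> A * (b - a)"
  shows "min (\<beta> / (A * 2 powr (\<beta> + 1))) (\<beta> * c powr (-\<beta>) / 2) \<le> a powr (-\<beta>) - b powr (-\<beta>)"
proof -
  have b: "b > 0" using ab by simp
  have "min (\<beta> / (A * 2 powr (\<beta> + 1))) (\<beta> * c powr (-\<beta>) / 2) \<le> \<beta> * b powr (-(\<beta> + 1)) * (b - a)"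
  proof (cases "b / 2 \<le> a")
    case True
    have "(b / 2) powr (\<beta> + 1) \<le> A * (b - a)"
      using powr_mono2[of "\<beta> + 1" "b / 2" a] True b \<beta> rec by simp
    then have "b powr (\<beta> + 1) \<le> A * 2 powr (\<beta> + 1) * (b - a)"
      using b by (simp add: powr_divide field_simps)
    then have "b powr (-(\<beta> + 1)) * b powr (\<beta> + 1) \<le> b powr (-(\<beta> + 1)) * (A * 2 powr (\<beta> + 1) * (b - a))"
      by (intro mult_left_mono) auto
    moreover have "b powr (-(\<beta> + 1)) * b powr (\<beta> + 1) = 1"
      using b by (simp flip: powr_add)
    ultimately have "1 \<le> A * 2 powr (\<beta> + 1) * (b powr (-(\<beta> + 1)) * (b - a))"
      by (simp only: ac_simps)
    then have "\<beta> \<le> A * 2 powr (\<beta> + 1) * (\<beta> * b powr (-(\<beta> + 1)) * (b - a))"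
      using mult_left_mono[of 1 _ \<beta>] \<beta> by (simp add: ac_simps)
    then show ?thesis using A by (simp add: min.coboundedI1 divide_le_eq mult.commute)
  next
    case False
    have "\<beta> * c powr (-\<beta>) / 2 \<le> \<beta> * b powr (-\<beta>) / 2"
      using powr_mono2'[of "-\<beta>" b c] b bc \<beta> by simp
    also have "\<dots> = \<beta> * b powr (-(\<beta> + 1)) * (b / 2)"
      using b by (simp add: powr_diff[of b "-\<beta>" 1, simplified])
    also have "\<dots> \<le> \<beta> * b powr (-(\<beta> + 1)) * (b - a)"
      using False \<beta> by (intro mult_left_mono) auto
    finally show ?thesis by (simp add: min.coboundedI2)
  qed
  then show ?thesis using powr_neg_diff_ge[OF ab \<beta>] by linarith
qed

context
  fixes r :: "nat \<Rightarrow> real" and A \<theta> :: real and N :: nat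
  assumes A_pos: "A > 0"
    and nonneg: "\<And>k. k \<ge> N \<Longrightarrow> 0 \<le> r k"
    and recursion: "\<And>k. k \<ge> N \<Longrightarrow> r (Suc k) powr (2 * \<theta>) \<le> A * (r k - r (Suc k))"
begin

lemma kl_recursion_decreasing:
  assumes "k \<ge> N"
  shows "r (Suc k) \<le> r k"
proof -
  have "0 \<le> A * (r k - r (Suc k))" using recursion[OF assms] powr_ge_zero order_trans by blast
  then show ?thesis using A_pos by (simp add: zero_le_mult_iff)
qed

lemma kl_recursion_antimono:
  assumes "N \<le> k" "k \<le> j"
  shows "r j \<le> r k"
  using assms by (intro lift_Suc_antimono_le_ivl[of "{N..}" r k j]) (auto intro: kl_recursion_decreasing)

lemma kl_recursion_eventually_zero_or_pos: "(\<forall>\<^sub>F k in sequentially. r k = 0) \<or> (\<forall>k\<ge>N. r k > 0)"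
proof (cases "\<exists>k\<ge>N. r k = 0")
  case True
  then obtain k0 where k0: "k0 \<ge> N" "r k0 = 0" by blast
  have "r k = 0" if "k \<ge> k0" for k
    using kl_recursion_antimono[of k0 k] nonneg[of k] that k0 by simp
  then show ?thesis unfolding eventually_sequentially by blast
next
  case False
  then show ?thesis using nonneg by force
qed

lemma kl_recursion_eventually_zero:
  assumes "\<theta> = 0" and lim: "r \<longlonglongrightarrow> 0"
  shows "\<forall>\<^sub>F k in sequentially. r k = 0"
proof -
  have "(\<lambda>k. A * (r k - r (Suc k))) \<longlonglongrightarrow> A * (0 - 0)"
    by (intro tendsto_intros lim LIMSEQ_Suc)
  then have "\<forall>\<^sub>F k in sequentially. A * (r k - r (Suc k)) < 1 \<and> k \<ge> N"
    by (intro eventually_conj order_tendstoD(2)) (auto simp: eventually_ge_at_top)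
  then have "\<forall>\<^sub>F k in sequentially. r (Suc k) = 0"
  proof eventually_elim
    case (elim k)
    \<comment> \<open>a positive value would give \<open>1 = r (Suc k) powr 0 \<le> A * (r k - r (Suc k)) < 1\<close>\<close>
    then show ?case using recursion[of k] nonneg[of "Suc k"] \<open>\<theta> = 0\<close> by (auto split: if_splits)
  qed
  then show ?thesis using eventually_sequentially_Suc[of "\<lambda>k. r k = 0"] by blast
qed

lemma kl_recursion_geometric:
  assumes \<theta>: "\<theta> \<le> 1/2" and lim: "r \<longlonglongrightarrow> 0"
  shows "\<exists>q. 0 < q \<and> q < 1 \<and> r \<in> O(\<lambda>k. q ^ k)"
proof -
  define q where "q = A / (1 + A)"
  have q: "0 < q" "q < 1" using A_pos by (auto simp: q_def)
  obtain K where K: "\<And>k. k \<ge> K \<Longrightarrow> r k < 1"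
    using order_tendstoD(2)[OF lim, of 1] by (auto simp: eventually_sequentially)
  have "r (Suc k) \<le> q * r k" if "k \<ge> max K N" for k
  proof -
    have "r (Suc k) \<le> r (Suc k) powr (2 * \<theta>)"
      using powr_mono'[of "2 * \<theta>" 1 "r (Suc k)"] K[of "Suc k"] nonneg[of "Suc k"] \<theta> that
      by (simp add: powr_one)
    then have "(1 + A) * r (Suc k) \<le> A * r k" using recursion[of k] that by (simp add: algebra_simps)
    then show ?thesis using A_pos by (simp add: q_def field_simps)
  qed
  then have "r \<in> O(\<lambda>k. q ^ k)"
    using bigo_power_of_eventually_contracting[OF q(1), of "max K N"] nonneg by simp
  with q show ?thesis by blast
qed

lemma kl_recursion_powr_growth:
  assumes \<theta>: "1/2 < \<theta>" and pos: "\<And>k. k \<ge> N \<Longrightarrow> r k > 0"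
  obtains \<mu> where "\<mu> > 0" "\<And>n. real n * \<mu> \<le> r (N + n) powr (1 - 2 * \<theta>)"
proof
  define \<beta> where "\<beta> = 2 * \<theta> - 1"
  have \<beta>: "\<beta> > 0" using \<theta> by (simp add: \<beta>_def)
  define \<mu> where "\<mu> = min (\<beta> / (A * 2 powr (\<beta> + 1))) (\<beta> * r N powr (-\<beta>) / 2)"
  show "\<mu> > 0" using \<beta> A_pos pos[of N] by (simp add: \<mu>_def)
  have step: "\<mu> \<le> r (Suc k) powr (-\<beta>) - r k powr (-\<beta>)" if "k \<ge> N" for k
    unfolding \<mu>_def
  proof (rule powr_neg_increment_ge[OF _ _ _ A_pos \<beta>])
    show "0 < r (Suc k)" "r (Suc k) \<le> r k" using pos kl_recursion_decreasing that by auto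
    show "r k \<le> r N"
      using kl_recursion_antimono that by simp
    show "r (Suc k) powr (\<beta> + 1) \<le> A * (r k - r (Suc k))"
      using recursion[OF that] by (simp add: \<beta>_def)
  qed
  show "real n * \<mu> \<le> r (N + n) powr (1 - 2 * \<theta>)" for n
  proof (induction n)
    case 0
    show ?case by simp
  next
    case (Suc n)
    then show ?case using step[of "N + n"] by (simp add: \<beta>_def algebra_simps)
  qed
qed

lemma kl_recursion_sublinear:
  assumes \<theta>: "1/2 < \<theta>"
  shows "r \<in> O(\<lambda>k. real k powr (1 / (1 - 2 * \<theta>)))"
  using kl_recursion_eventually_zero_or_pos
proof
  assume "\<forall>\<^sub>F k in sequentially. r k = 0"
  then show ?thesis by (intro bigoI[where c = 0]) (auto elim: eventually_mono)
next
  assume pos: "\<forall>k\<ge>N. r k > 0"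
  obtain \<mu> where \<mu>: "\<mu> > 0" "\<And>n. real n * \<mu> \<le> r (N + n) powr (1 - 2 * \<theta>)"
    using kl_recursion_powr_growth \<theta> pos by blast
  define c where "c = (\<mu> / 2) powr (1 / (1 - 2 * \<theta>))"
  show ?thesis
  proof (rule bigoI[where c = c])
    show "\<forall>\<^sub>F k in sequentially. norm (r k) \<le> c * norm (real k powr (1 / (1 - 2 * \<theta>)))"
      unfolding eventually_sequentially
    proof (intro exI[of _ "2 * N + 1"] allI impI)
      fix k assume k: "2 * N + 1 \<le> k"
      obtain n where n: "k = N + n" using k le_Suc_ex[of N k] by auto
      have rk: "r k > 0" using pos k by simp
      have "real k / 2 \<le> real n" using k n by simp
      then have "\<mu> / 2 * real k \<le> real n * \<mu>"
        using mult_right_mono[of "real k / 2" "real n" \<mu>] \<mu>(1) by (simp add: mult.commute)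
      then have "\<mu> / 2 * real k \<le> r k powr (1 - 2 * \<theta>)" using \<mu>(2)[of n] n by simp
      \<comment> \<open>the exponent \<open>1 / (1 - 2\<theta>)\<close> is negative, so raising to it reverses the inequality\<close>
      then have "(r k powr (1 - 2 * \<theta>)) powr (1 / (1 - 2 * \<theta>)) \<le> (\<mu> / 2 * real k) powr (1 / (1 - 2 * \<theta>))"
        using \<theta> \<mu>(1) k by (intro powr_mono2') (auto simp: divide_le_0_iff)
      moreover have "(r k powr (1 - 2 * \<theta>)) powr (1 / (1 - 2 * \<theta>)) = r k"
        using rk \<theta> by (simp add: powr_powr)
      ultimately show "norm (r k) \<le> c * norm (real k powr (1 / (1 - 2 * \<theta>)))"
        using rk \<mu>(1) powr_mult[of "\<mu> / 2" "real k" "1 / (1 - 2 * \<theta>)"] by (simp add: c_def)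
    qed
  qed
qed

end

section \<open>Functions with Lipschitz gradient\<close>

lemma has_derivative_subgradient_eq:
  fixes H :: "'a::euclidean_space \<Rightarrow> real"
  assumes der: "(H has_derivative (\<lambda>v. G \<bullet> v)) (at u)"
    and sub: "\<And>z. H u + y \<bullet> (z - u) \<le> H z"
  shows "y = G"
proof -
  \<comment> \<open>\<open>u\<close> minimises \<open>H z - y \<bullet> z\<close>, so the derivative \<open>G - y\<close> of that function at \<open>u\<close> vanishes\<close>
  have "((\<lambda>z. H z - y \<bullet> z) has_derivative (\<lambda>v. G \<bullet> v - y \<bullet> v)) (at u)"
    by (intro derivative_intros der)
  moreover have "\<forall>z\<in>UNIV. H u - y \<bullet> u \<le> H z - y \<bullet> z"
    using sub by (simp add: inner_diff_right algebra_simps)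
  ultimately have "(\<lambda>v. G \<bullet> v - y \<bullet> v) = (\<lambda>v. 0)"
    using differential_zero_maxmin[OF _ open_UNIV] by blast
  then have "(G - y) \<bullet> (G - y) = 0" by (metis inner_diff_left)
  then show ?thesis by simp
qed

lemma locally_lipschitz_fun_lipschitz_on_compact:
  fixes G :: "'a::euclidean_space \<Rightarrow> 'b::metric_space"
  assumes "locally_lipschitz_fun G" and "compact S"
  obtains L where "L-lipschitz_on S G"
proof -
  have "local_lipschitz {0::real} S (\<lambda>_. G)"
  proof (rule local_lipschitzI)
    fix z
    obtain r L where r: "r > 0" and lip: "\<forall>u\<in>ball z r. \<forall>v\<in>ball z r. dist (G u) (G v) \<le> L * dist u v"
      using assms(1) unfolding locally_lipschitz_fun_def by blast
    have "(max L 0)-lipschitz_on (cball z (r/2) \<inter> S) G"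
    proof (rule lipschitz_onI)
      fix u v assume "u \<in> cball z (r/2) \<inter> S" "v \<in> cball z (r/2) \<inter> S"
      then have "dist (G u) (G v) \<le> L * dist u v" using r lip by auto
      also have "\<dots> \<le> max L 0 * dist u v" by (intro mult_right_mono) auto
      finally show "dist (G u) (G v) \<le> max L 0 * dist u v" .
    qed simp
    then show "\<exists>u>0. \<exists>L. \<forall>t\<in>cball t u \<inter> {0}. L-lipschitz_on (cball z u \<inter> S) G" for t :: real
      using r by (intro exI[of _ "r/2"]) auto
  qed
  from local_lipschitz_compact_implies_lipschitz[OF this assms(2) compact_sing] that
  show ?thesis by auto
qed

lemma descent_lemma:
  fixes H :: "'a::euclidean_space \<Rightarrow> real"
  assumes der: "\<And>u. (H has_derivative (\<lambda>v. G u \<bullet> v)) (at u)"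
    and lip: "L-lipschitz_on S G" and S: "convex S" "a \<in> S" "b \<in> S"
  shows "H b \<le> H a + G a \<bullet> (b - a) + L/2 * (norm (b - a))\<^sup>2"
proof -
  define \<phi> where "\<phi> t = H (a + t *\<^sub>R (b - a)) - t * (G a \<bullet> (b - a)) - L/2 * t\<^sup>2 * (norm (b - a))\<^sup>2" for t
  have "\<phi> 1 \<le> \<phi> 0"
  proof (rule DERIV_nonpos_imp_nonincreasing[of 0 1 \<phi>])
    fix t :: real assume t: "0 \<le> t" "t \<le> 1"
    define p where "p = a + t *\<^sub>R (b - a)"
    have "p = (1 - t) *\<^sub>R a + t *\<^sub>R b" by (simp add: p_def algebra_simps)
    then have p: "p \<in> S" using S t by (simp add: convex_alt)
    have "((\<lambda>t. a + t *\<^sub>R (b - a)) has_derivative (\<lambda>s. s *\<^sub>R (b - a))) (at t)"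
      by (auto intro!: derivative_eq_intros)
    from has_derivative_compose[OF this der[of p, unfolded p_def]]
    have "((\<lambda>t. H (a + t *\<^sub>R (b - a))) has_real_derivative G p \<bullet> (b - a)) (at t)"
      by (simp add: has_field_derivative_def p_def mult.commute[of _ "G _ \<bullet> (b - a)"])
    then have D: "(\<phi> has_real_derivative (G p - G a) \<bullet> (b - a) - L * t * (norm (b - a))\<^sup>2) (at t)"
      unfolding \<phi>_def by (auto intro!: derivative_eq_intros simp: inner_diff_left)
    have "(G p - G a) \<bullet> (b - a) \<le> norm (G p - G a) * norm (b - a)"
      by (rule norm_cauchy_schwarz)
    also have "\<dots> \<le> L * norm (p - a) * norm (b - a)"
      using lipschitz_on_normD[OF lip p S(2)] by (intro mult_right_mono) auto
    also have "\<dots> = L * t * (norm (b - a))\<^sup>2"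
      using t by (simp add: p_def power2_eq_square)
    finally show "\<exists>y. (\<phi> has_real_derivative y) (at t) \<and> y \<le> 0" using D by auto
  qed simp
  then show ?thesis by (simp add: \<phi>_def)
qed

lemma cocoercive_gradient:
  fixes H :: "'a::euclidean_space \<Rightarrow> real"
  assumes der: "\<And>u. (H has_derivative (\<lambda>v. G u \<bullet> v)) (at u)"
    and lip: "L-lipschitz_on S G" and S: "convex S" and L: "L > 0"
    and b: "b \<in> S" and w: "b - (1/L) *\<^sub>R (G b - G a) \<in> S"
    and sub: "\<And>z. H a + G a \<bullet> (z - a) \<le> H z"
  shows "(norm (G b - G a))\<^sup>2 / (2 * L) \<le> H b - H a - G a \<bullet> (b - a)"
proof -
  \<comment> \<open>compare the descent lemma at \<open>b\<close> with the supporting hyperplane at \<open>a\<close>, both at the gradient step \<open>w\<close>\<close>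
  define D where "D = G b - G a"
  define w where "w = b - (1/L) *\<^sub>R D"
  have "H w \<le> H b + G b \<bullet> (w - b) + L/2 * (norm (w - b))\<^sup>2"
    unfolding w_def D_def by (rule descent_lemma[OF der lip S b w])
  also have "\<dots> = H b - (G b \<bullet> D) / L + L/2 * ((norm D)\<^sup>2 / L\<^sup>2)"
    using L by (simp add: w_def power_divide)
  finally have up: "H w \<le> H b - (G b \<bullet> D) / L + L/2 * ((norm D)\<^sup>2 / L\<^sup>2)" .
  have "H a + G a \<bullet> (w - a) \<le> H w" by (rule sub)
  then have low: "H a + G a \<bullet> (b - a) - (G a \<bullet> D) / L \<le> H w"
    by (simp add: w_def inner_diff_right)
  have "(G b \<bullet> D - G a \<bullet> D) / L - L/2 * ((norm D)\<^sup>2 / L\<^sup>2) \<le> H b - H a - G a \<bullet> (b - a)"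
    using up low unfolding diff_divide_distrib by linarith
  moreover have "G b \<bullet> D - G a \<bullet> D = (norm D)\<^sup>2"
    by (simp add: D_def power2_norm_eq_inner inner_diff_left)
  moreover have "(norm D)\<^sup>2 / L - L/2 * ((norm D)\<^sup>2 / L\<^sup>2) = (norm D)\<^sup>2 / (2 * L)"
    using L by (simp add: power2_eq_square field_simps)
  ultimately show ?thesis by (simp add: D_def)
qed

lemma cocoercive_gradient_on_bounded:
  fixes H :: "'a::euclidean_space \<Rightarrow> real"
  assumes der: "\<And>u. (H has_derivative (\<lambda>v. G u \<bullet> v)) (at u)"
    and loclip: "locally_lipschitz_fun G" and S: "bounded S"
    and sub: "\<And>a z. a \<in> S \<Longrightarrow> H a + G a \<bullet> (z - a) \<le> H z"
  obtains L where "L > 0"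
    "\<And>a b. a \<in> S \<Longrightarrow> b \<in> S \<Longrightarrow> (norm (G b - G a))\<^sup>2 / (2 * L) \<le> H b - H a - G a \<bullet> (b - a)"
proof -
  obtain R where R: "R > 0" "\<And>x. x \<in> S \<Longrightarrow> norm x \<le> R" using S by (auto simp: bounded_pos)
  obtain L1 where L1: "L1-lipschitz_on (cball 0 (R + 1)) G"
    using locally_lipschitz_fun_lipschitz_on_compact[OF loclip compact_cball] .
  have L1_nonneg: "L1 \<ge> 0" using L1 lipschitz_on_nonneg by blast
  \<comment> \<open>\<open>L \<ge> 2 R L1\<close> keeps the gradient step from a point of \<open>S\<close> inside the ball of radius \<open>R + 1\<close>\<close>
  define L where "L = max 1 (max L1 (2 * R * L1))"
  have L: "L > 0" "L-lipschitz_on (cball 0 (R + 1)) G"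
    using lipschitz_on_mono[OF L1 order_refl] by (auto simp: L_def)
  show ?thesis
  proof (rule that[OF L(1) cocoercive_gradient[OF der L(2) convex_cball L(1)]])
    fix a b assume ab: "a \<in> S" "b \<in> S"
    have ball: "a \<in> cball 0 (R + 1)" "b \<in> cball 0 (R + 1)" using R(2)[OF ab(1)] R(2)[OF ab(2)] by auto
    then show "b \<in> cball 0 (R + 1)" by simp
    have "norm (G b - G a) \<le> L1 * norm (b - a)"
      using lipschitz_on_normD[OF L1 ball(2) ball(1)] .
    also have "\<dots> \<le> 2 * R * L1"
      using R(2)[OF ab(1)] R(2)[OF ab(2)] norm_triangle_ineq4[of b a] L1_nonneg
      by (simp add: mult.commute mult_left_mono)
    also have "\<dots> \<le> L" by (simp add: L_def)
    finally have "norm ((1/L) *\<^sub>R (G b - G a)) \<le> 1" using L(1) by simp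
    then show "b - (1/L) *\<^sub>R (G b - G a) \<in> cball 0 (R + 1)"
      using R(2)[OF ab(2)] norm_triangle_ineq4[of b "(1/L) *\<^sub>R (G b - G a)"] by simp
    show "H a + G a \<bullet> (z - a) \<le> H z" for z using sub ab by blast
  qed
qed

section \<open>Subgradients and the KL inequality\<close>

lemma frechet_subdiff_subset_limiting_subdiff: "frechet_subdiff \<phi> x \<subseteq> limiting_subdiff \<phi> x"
proof
  fix y assume "y \<in> frechet_subdiff \<phi> x"
  then show "y \<in> limiting_subdiff \<phi> x"
    unfolding limiting_subdiff_def by (intro CollectI exI[of _ "\<lambda>_. x"] exI[of _ "\<lambda>_. y"]) auto
qed

lemma frechet_subdiffI_first_order:
  fixes \<phi> :: "'a::euclidean_space \<Rightarrow> ereal" and E :: "'a \<Rightarrow> real"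
  assumes b: "\<phi> b = ereal c"
    and low: "\<And>z. z \<noteq> b \<Longrightarrow> \<phi> b + ereal (v \<bullet> (z - b) - E z) \<le> \<phi> z"
    and E: "((\<lambda>z. norm (E z) / norm (z - b)) \<longlongrightarrow> 0) (at b)"
  shows "v \<in> frechet_subdiff \<phi> b"
proof -
  let ?Q = "\<lambda>z. (\<phi> z - \<phi> b - ereal (v \<bullet> (z - b))) / ereal (norm (z - b))"
  have "\<forall>\<^sub>F z in at b. ereal (- (norm (E z) / norm (z - b))) \<le> ?Q z"
    unfolding eventually_at_filter
  proof (intro always_eventually allI impI)
    fix z assume "z \<noteq> b"
    then have n: "norm (z - b) > 0" by simp
    show "ereal (- (norm (E z) / norm (z - b))) \<le> ?Q z"
    proof (cases "\<phi> z")
      case (real cz)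
      have "- norm (E z) \<le> cz - c - v \<bullet> (z - b)"
        using low[OF \<open>z \<noteq> b\<close>] b real by (simp add: abs_if)
      then have "- norm (E z) / norm (z - b) \<le> (cz - c - v \<bullet> (z - b)) / norm (z - b)"
        using n by (intro divide_right_mono) auto
      then show ?thesis using real b n by simp
    next
      case PInf
      then show ?thesis using b n by simp
    next
      case MInf
      then show ?thesis using low[OF \<open>z \<noteq> b\<close>] b by simp
    qed
  qed
  then have "Liminf (at b) (\<lambda>z. ereal (- (norm (E z) / norm (z - b)))) \<le> Liminf (at b) ?Q"
    by (rule Liminf_mono)
  moreover have "((\<lambda>z. ereal (- (norm (E z) / norm (z - b)))) \<longlongrightarrow> 0) (at b)"
    using tendsto_ereal[OF tendsto_minus[OF E]] by (simp add: zero_ereal_def)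
  then have "Liminf (at b) (\<lambda>z. ereal (- (norm (E z) / norm (z - b)))) = 0"
    by (rule lim_imp_Liminf[OF trivial_limit_at])
  ultimately show ?thesis unfolding frechet_subdiff_def using b by simp
qed

lemma dc_minimizer_limiting_subgradient:
  fixes g h :: "'a::euclidean_space \<Rightarrow> ereal" and H :: "'a \<Rightarrow> real"
  assumes g: "\<And>z. g z \<noteq> -\<infinity>" and h: "\<And>z. h z = ereal (H z)"
    and der: "(H has_derivative (\<lambda>w. G \<bullet> w)) (at u)"
    and u: "u \<in> C" "g u \<noteq> \<infinity>"
    and min: "\<And>z. z \<in> C \<Longrightarrow> g u - ereal (v \<bullet> u) \<le> g z - ereal (v \<bullet> z)"
  shows "v - G \<in> limiting_subdiff (\<lambda>z. dcf g h z + indicator_ext C z - ereal c) u"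
proof -
  define \<Psi> where "\<Psi> z = dcf g h z + indicator_ext C z - ereal c" for z
  obtain gu where gu: "g u = ereal gu" using g u by (cases "g u") auto
  define E where "E z = H z - H u - G \<bullet> (z - u)" for z
  have \<Psi>u: "\<Psi> u = ereal (gu - H u - c)" using gu h u by (simp add: \<Psi>_def dcf_def indicator_ext_def)
  have "v - G \<in> frechet_subdiff \<Psi> u"
  proof (rule frechet_subdiffI_first_order[where \<phi> = \<Psi> and b = u, OF \<Psi>u])
    show "((\<lambda>z. norm (E z) / norm (z - u)) \<longlongrightarrow> 0) (at u)"
      using der unfolding has_derivative_iff_norm E_def by simp
    show "\<Psi> u + ereal ((v - G) \<bullet> (z - u) - E z) \<le> \<Psi> z" if "z \<noteq> u" for z
    proof (cases "z \<in> C \<and> g z \<noteq> \<infinity>")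
      case True
      then obtain gz where gz: "g z = ereal gz" using g by (cases "g z") auto
      have "gu - v \<bullet> u \<le> gz - v \<bullet> z" using min[of z] True gu gz by simp
      then show ?thesis using True gz h \<Psi>u
        by (simp add: \<Psi>_def dcf_def indicator_ext_def E_def inner_diff_left inner_diff_right)
    next
      case False
      \<comment> \<open>\<open>\<Psi> z = \<infinity>\<close> here: \<open>g\<close> never takes the value \<open>-\<infinity>\<close> and \<open>h\<close> is finite\<close>
      have "dcf g h z \<noteq> -\<infinity>" using g[of z] h[of z] by (cases "g z") (auto simp: dcf_def)
      then have "\<Psi> z = \<infinity>" using False by (auto simp: \<Psi>_def dcf_def indicator_ext_def)
      then show ?thesis by simp
    qed
  qed
  then show ?thesis
    using frechet_subdiff_subset_limiting_subdiff unfolding \<Psi>_def by blast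
qed

lemma kl_inequality_powr_le_norm:
  fixes c t \<theta> :: real
  assumes kl: "1 \<le> ereal (c * t powr (-\<theta>)) * dist0 S"
    and "0 < c" "0 < t" "v \<in> S"
  shows "t powr \<theta> \<le> c * norm v"
proof -
  have "dist0 S \<le> ereal (norm v)" unfolding dist0_def by (rule INF_lower) fact
  then have "ereal (c * t powr (-\<theta>)) * dist0 S \<le> ereal (c * t powr (-\<theta>)) * ereal (norm v)"
    by (rule ereal_mult_left_mono) (use assms in simp)
  from order_trans[OF kl this] have "1 \<le> c * t powr (-\<theta>) * norm v" by simp
  then have "t powr \<theta> * 1 \<le> t powr \<theta> * (c * t powr (-\<theta>) * norm v)"
    by (intro mult_left_mono) auto
  moreover have "t powr \<theta> * t powr (-\<theta>) = 1" using \<open>0 < t\<close> by (simp flip: powr_add)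
  ultimately show ?thesis by (simp add: algebra_simps)
qed

lemma eventually_in_open_of_cluster_points:
  fixes x :: "nat \<Rightarrow> 'a::heine_borel"
  assumes "bounded (range x)" and "open U" and "cluster_points x \<subseteq> U"
  shows "\<forall>\<^sub>F k in sequentially. x k \<in> U"
proof (rule ccontr)
  assume "\<not> ?thesis"
  then obtain r :: "nat \<Rightarrow> nat" where r: "strict_mono r" "\<And>n. x (r n) \<notin> U"
    using not_eventually_sequentiallyD by blast
  have "bounded (range (x \<circ> r))" using assms(1) by (rule bounded_subset) auto
  then obtain l s where s: "strict_mono s" "((x \<circ> r) \<circ> s) \<longlonglongrightarrow> l"
    using bounded_imp_convergent_subsequence by blast
  have "l \<in> cluster_points x" unfolding cluster_points_def
    using s r by (intro CollectI exI[of _ "r \<circ> s"]) (auto simp: o_assoc strict_mono_o)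
  then have "\<forall>\<^sub>F n in sequentially. ((x \<circ> r) \<circ> s) n \<in> U"
    using topological_tendstoD[OF s(2) assms(2)] assms(3) by blast
  then show False using r(2) by (auto dest: eventually_happens')
qed

section \<open>The DC algorithm with a smooth second component\<close>

lemma dcf_finite:
  assumes "g z \<noteq> -\<infinity>" "h z = ereal hz" "dcf g h z < \<infinity>"
  shows "g z = ereal (real_of_ereal (dcf g h z) + hz)" "dcf g h z = ereal (real_of_ereal (dcf g h z))"
  using assms by (cases "g z"; simp add: dcf_def)+

lemma dca_subgradient_eq_gradient:
  fixes H :: "'a::euclidean_space \<Rightarrow> real"
  assumes h: "\<And>z. h z = ereal (H z)" and der: "\<And>u. (H has_derivative (\<lambda>w. G u \<bullet> w)) (at u)"
    and dca: "dca_seq g h C x y"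
  shows "y k = G (x k)" and "H (x k) + G (x k) \<bullet> (z - x k) \<le> H z"
proof -
  have sub: "H (x k) + y k \<bullet> (z - x k) \<le> H z" for z
    using dca h unfolding dca_seq_def csubdiff_def by force
  show "y k = G (x k)" using has_derivative_subgradient_eq[OF der sub] .
  with sub show "H (x k) + G (x k) \<bullet> (z - x k) \<le> H z" by simp
qed

lemma dca_sufficient_decrease:
  fixes g h :: "'a::euclidean_space \<Rightarrow> ereal" and H :: "'a \<Rightarrow> real"
  assumes g: "\<And>z. g z \<noteq> -\<infinity>" and h: "\<And>z. h z = ereal (H z)"
    and der: "\<And>u. (H has_derivative (\<lambda>w. G u \<bullet> w)) (at u)" and loclip: "locally_lipschitz_fun G"
    and dca: "dca_seq g h C x y" and bdd: "bounded (range x)"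
  obtains L where "L > 0"
    "\<And>k. 0 < k \<Longrightarrow> dcf g h (x k) < \<infinity> \<Longrightarrow> dcf g h (x (Suc k)) < \<infinity> \<Longrightarrow>
      (norm (G (x (Suc k)) - G (x k)))\<^sup>2 / (2 * L)
        \<le> real_of_ereal (dcf g h (x k)) - real_of_ereal (dcf g h (x (Suc k)))"
proof -
  obtain L where L: "L > 0"
    and coco: "\<And>a b. a \<in> range x \<Longrightarrow> b \<in> range x \<Longrightarrow>
      (norm (G b - G a))\<^sup>2 / (2 * L) \<le> H b - H a - G a \<bullet> (b - a)"
    using cocoercive_gradient_on_bounded[OF der loclip bdd]
      dca_subgradient_eq_gradient(2)[OF h der dca] by blast
  show ?thesis
  proof (rule that[OF L])
    fix k :: nat
    assume k: "0 < k" and fin: "dcf g h (x k) < \<infinity>" "dcf g h (x (Suc k)) < \<infinity>"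
    define f where "f j = real_of_ereal (dcf g h (x j))" for j
    have "x k \<in> C" using dca k unfolding dca_seq_def by (metis Suc_pred)
    then have "g (x (Suc k)) - ereal (y k \<bullet> x (Suc k)) \<le> g (x k) - ereal (y k \<bullet> x k)"
      using dca unfolding dca_seq_def by blast
    then have "f (Suc k) + H (x (Suc k)) - G (x k) \<bullet> x (Suc k) \<le> f k + H (x k) - G (x k) \<bullet> x k"
      using dcf_finite(1)[OF g h fin(1)] dcf_finite(1)[OF g h fin(2)]
        dca_subgradient_eq_gradient(1)[OF h der dca]
      by (simp add: f_def)
    then show "(norm (G (x (Suc k)) - G (x k)))\<^sup>2 / (2 * L) \<le> f k - f (Suc k)"
      using coco[of "x k" "x (Suc k)"] by (simp add: inner_diff_right)
  qed
qed

lemma dca_value_gap_decrease: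
  fixes g h :: "'a::euclidean_space \<Rightarrow> ereal" and H :: "'a \<Rightarrow> real"
  assumes g: "\<And>z. g z \<noteq> -\<infinity>" and h: "\<And>z. h z = ereal (H z)"
    and der: "\<And>u. (H has_derivative (\<lambda>w. G u \<bullet> w)) (at u)" and loclip: "locally_lipschitz_fun G"
    and dca: "dca_seq g h C x y" and bdd: "bounded (range x)"
    and flim: "(\<lambda>k. dcf g h (x k)) \<longlonglongrightarrow> ereal fstar"
    and r_def: "r = (\<lambda>k. real_of_ereal (dcf g h (x k)) - fstar)"
  obtains L K where "L > 0" "r \<longlonglongrightarrow> 0"
    "\<And>k. k \<ge> K \<Longrightarrow> dcf g h (x k) = ereal (fstar + r k)"
    "\<And>k. k \<ge> K \<Longrightarrow> 0 \<le> r k"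
    "\<And>k. k \<ge> K \<Longrightarrow> (norm (G (x (Suc k)) - G (x k)))\<^sup>2 / (2 * L) \<le> r k - r (Suc k)"
proof -
  obtain L where L: "L > 0" and decrease': "\<And>k. 0 < k \<Longrightarrow> dcf g h (x k) < \<infinity> \<Longrightarrow>
      dcf g h (x (Suc k)) < \<infinity> \<Longrightarrow> (norm (G (x (Suc k)) - G (x k)))\<^sup>2 / (2 * L)
        \<le> real_of_ereal (dcf g h (x k)) - real_of_ereal (dcf g h (x (Suc k)))"
    using dca_sufficient_decrease[OF g h der loclip dca bdd] by blast
  obtain K0 where K0: "\<And>k. k \<ge> K0 \<Longrightarrow> dcf g h (x k) < \<infinity>"
    using order_tendstoD(2)[OF flim, of \<infinity>] by (auto simp: eventually_sequentially)
  have decrease: "(norm (G (x (Suc k)) - G (x k)))\<^sup>2 / (2 * L) \<le> r k - r (Suc k)" if "k \<ge> Suc K0" for k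
    using decrease'[of k] K0[of k] K0[of "Suc k"] that by (simp add: r_def)
  have dcf_r: "dcf g h (x k) = ereal (fstar + r k)" if "k \<ge> K0" for k
    using dcf_finite(2)[OF g h K0[OF that]] by (simp add: r_def)
  have "\<forall>\<^sub>F k in sequentially. dcf g h (x k) = ereal (fstar + r k)"
    using dcf_r by (auto simp: eventually_sequentially)
  with flim have "(\<lambda>k. ereal (fstar + r k)) \<longlonglongrightarrow> ereal (fstar + 0)"
    by (simp only: add_0_right) (rule Lim_transform_eventually)
  then have r_lim: "r \<longlonglongrightarrow> 0" by (simp only: lim_ereal tendsto_add_const_iff)
  have r_decreasing: "r (Suc k) \<le> r k" if "k \<ge> Suc K0" for k
  proof -
    have "0 \<le> (norm (G (x (Suc k)) - G (x k)))\<^sup>2 / (2 * L)" using L by simp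
    then show ?thesis using decrease[OF that] by linarith
  qed
  have "0 \<le> r k" if "k \<ge> Suc K0" for k
  proof (rule LIMSEQ_le_const2[OF r_lim], intro exI allI impI)
    fix j assume "k \<le> j"
    then show "r j \<le> r k"
      using that by (intro lift_Suc_antimono_le_ivl[of "{Suc K0..}" r k j]) (auto intro: r_decreasing)
  qed
  with that[OF L r_lim, of "Suc K0"] dcf_r decrease show ?thesis by simp
qed

lemma dca_kl_gradient_bound:
  fixes g h :: "'a::euclidean_space \<Rightarrow> ereal" and H :: "'a \<Rightarrow> real"
  assumes g: "\<And>z. g z \<noteq> -\<infinity>" and h: "\<And>z. h z = ereal (H z)"
    and der: "\<And>u. (H has_derivative (\<lambda>w. G u \<bullet> w)) (at u)" and dca: "dca_seq g h C x y"
    and KL: "M > 0" "\<theta> < 1"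
      "\<forall>u\<in>V. let \<Psi> = (\<lambda>z. dcf g h z + indicator_ext C z - ereal fstar) in
          (0 < \<Psi> u \<and> \<Psi> u < \<eta> \<longrightarrow>
            ereal (M * (1 - \<theta>) * (real_of_ereal (\<Psi> u)) powr (- \<theta>)) * dist0 (limiting_subdiff \<Psi> u) \<ge> 1)"
    and u: "x (Suc k) \<in> V" "dcf g h (x (Suc k)) = ereal (fstar + t)" "0 < t" "ereal t < \<eta>"
  shows "t powr \<theta> \<le> M * (1 - \<theta>) * norm (G (x (Suc k)) - G (x k))"
proof -
  define \<Psi> where "\<Psi> z = dcf g h z + indicator_ext C z - ereal fstar" for z
  have C: "x (Suc k) \<in> C" using dca unfolding dca_seq_def by blast
  then have \<Psi>: "\<Psi> (x (Suc k)) = ereal t" using u(2) by (simp add: \<Psi>_def indicator_ext_def)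
  have "G (x k) - G (x (Suc k)) \<in> limiting_subdiff \<Psi> (x (Suc k))"
    unfolding \<Psi>_def
  proof (rule dc_minimizer_limiting_subgradient[OF g h der C])
    show "g (x (Suc k)) \<noteq> \<infinity>" using u(2) by (auto simp: dcf_def split: if_splits)
    show "g (x (Suc k)) - ereal (G (x k) \<bullet> x (Suc k)) \<le> g z - ereal (G (x k) \<bullet> z)" if "z \<in> C" for z
      using dca that dca_subgradient_eq_gradient(1)[OF h der dca, of k] unfolding dca_seq_def by metis
  qed
  moreover have "1 \<le> ereal (M * (1 - \<theta>) * t powr (- \<theta>)) * dist0 (limiting_subdiff \<Psi> (x (Suc k)))"
    using KL(3) u \<Psi> unfolding \<Psi>_def Let_def by auto
  ultimately show ?thesis
    using kl_inequality_powr_le_norm[of "M * (1 - \<theta>)" t \<theta>] KL(1,2) u(3)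
    by (simp add: norm_minus_commute)
qed

lemma dca_kl_recursion:
  fixes g h :: "'a::euclidean_space \<Rightarrow> ereal" and H :: "'a \<Rightarrow> real"
  assumes g: "\<And>z. g z \<noteq> -\<infinity>" and h: "\<And>z. h z = ereal (H z)"
    and der: "\<And>u. (H has_derivative (\<lambda>w. G u \<bullet> w)) (at u)" and loclip: "locally_lipschitz_fun G"
    and dca: "dca_seq g h C x y" and bdd: "bounded (range x)"
    and flim: "(\<lambda>k. dcf g h (x k)) \<longlonglongrightarrow> ereal fstar"
    and KL: "M > 0" "\<theta> < 1" "\<eta> > 0"
      "\<exists>U. open U \<and> cluster_points x \<subseteq> U \<and> U \<subseteq> V"
      "\<forall>u\<in>V. let \<Psi> = (\<lambda>z. dcf g h z + indicator_ext C z - ereal fstar) in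
          (0 < \<Psi> u \<and> \<Psi> u < \<eta> \<longrightarrow>
            ereal (M * (1 - \<theta>) * (real_of_ereal (\<Psi> u)) powr (- \<theta>)) * dist0 (limiting_subdiff \<Psi> u) \<ge> 1)"
    and r_def: "r = (\<lambda>k. real_of_ereal (dcf g h (x k)) - fstar)"
  obtains A N where "A > 0" "r \<longlonglongrightarrow> 0"
    "\<And>k. k \<ge> N \<Longrightarrow> dcf g h (x k) = ereal (fstar + r k)"
    "\<And>k. k \<ge> N \<Longrightarrow> 0 \<le> r k"
    "\<And>k. k \<ge> N \<Longrightarrow> r (Suc k) powr (2 * \<theta>) \<le> A * (r k - r (Suc k))"
proof -
  obtain L K where L: "L > 0" and r_lim: "r \<longlonglongrightarrow> 0"
    and dcf_r: "\<And>k. k \<ge> K \<Longrightarrow> dcf g h (x k) = ereal (fstar + r k)"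
    and nonneg: "\<And>k. k \<ge> K \<Longrightarrow> 0 \<le> r k"
    and decrease: "\<And>k. k \<ge> K \<Longrightarrow> (norm (G (x (Suc k)) - G (x k)))\<^sup>2 / (2 * L) \<le> r k - r (Suc k)"
    using dca_value_gap_decrease[OF g h der loclip dca bdd flim r_def] by blast
  obtain U where U: "open U" "cluster_points x \<subseteq> U" "U \<subseteq> V" using KL(4) by blast
  have "\<forall>\<^sub>F k in sequentially. x k \<in> V \<and> ereal (r k) < \<eta>"
  proof (rule eventually_conj)
    show "\<forall>\<^sub>F k in sequentially. x k \<in> V"
      using eventually_in_open_of_cluster_points[OF bdd U(1,2)] U(3) by (auto elim: eventually_mono)
    show "\<forall>\<^sub>F k in sequentially. ereal (r k) < \<eta>"
      using r_lim KL(3) by (intro order_tendstoD(2)) (auto simp: lim_ereal zero_ereal_def)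
  qed
  then obtain K1 where K1: "\<And>k. k \<ge> K1 \<Longrightarrow> x k \<in> V \<and> ereal (r k) < \<eta>"
    by (auto simp: eventually_sequentially)
  define N where "N = max K K1"
  define A where "A = (M * (1 - \<theta>))\<^sup>2 * (2 * L)"
  have A: "A > 0" using KL(1,2) L by (simp add: A_def)
  have recursion: "r (Suc k) powr (2 * \<theta>) \<le> A * (r k - r (Suc k))" if k: "k \<ge> N" for k
  proof (cases "r (Suc k) = 0")
    case True
    \<comment> \<open>trivial, as \<open>0 powr a = 0\<close> for every \<open>a\<close> in Isabelle, including \<open>a = 0\<close>\<close>
    then show ?thesis using A nonneg[of k] k by (simp add: N_def)
  next
    case False
    then have pos: "r (Suc k) > 0" using nonneg[of "Suc k"] k by (simp add: N_def)
    have "r (Suc k) powr \<theta> \<le> M * (1 - \<theta>) * norm (G (x (Suc k)) - G (x k))"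
      using dca_kl_gradient_bound[OF g h der dca KL(1,2,5)] K1[of "Suc k"] dcf_r[of "Suc k"] pos k
      by (simp add: N_def)
    then have "(r (Suc k) powr \<theta>)\<^sup>2 \<le> (M * (1 - \<theta>))\<^sup>2 * (norm (G (x (Suc k)) - G (x k)))\<^sup>2"
      using power_mono[of _ _ 2] by (fastforce simp: power_mult_distrib)
    also have "\<dots> \<le> (M * (1 - \<theta>))\<^sup>2 * (2 * L * (r k - r (Suc k)))"
      using decrease[of k] k L by (intro mult_left_mono) (auto simp: N_def field_simps)
    finally show ?thesis by (simp add: A_def powr_powr[symmetric] algebra_simps flip: powr_realpow)
  qed
  show ?thesis
    using that[OF A r_lim, of N] dcf_r nonneg recursion by (simp add: N_def)
qed

theorem theorem7:
  fixes g h :: "'a::euclidean_space \<Rightarrow> ereal"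
    and C :: "'a set"
    and x y :: "nat \<Rightarrow> 'a"
    and fstar :: real
    and M \<theta> :: real and \<eta> :: ereal and V :: "'a set"
  assumes gG: "g \<in> Gamma0" and hG: "h \<in> Gamma0"
    and C: "C \<noteq> {}" "closed C" "convex C"
    and sol: "\<exists>xo\<in>C. \<forall>z\<in>C. dcf g h xo \<le> dcf g h z"
    and dca: "dca_seq g h C x y"
    and bdd: "bounded (range x)" "bounded (range y)"
    and fcont: "continuous_on (edom (dcf g h)) (dcf g h)"
    and moduli: "\<exists>\<rho>g \<rho>h::real. \<rho>g \<ge> 0 \<and> \<rho>h \<ge> 0 \<and> \<rho>g + \<rho>h > 0 \<and>
        (\<forall>u\<in>C. \<forall>z\<in>C. \<forall>w\<in>csubdiff g u.
            g z \<ge> g u + ereal (w \<bullet> (z - u)) + ereal (\<rho>g / 2 * (norm (z - u))\<^sup>2)) \<and>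
        (\<forall>u\<in>C. \<forall>z\<in>C. \<forall>v\<in>csubdiff h u.
            h z \<ge> h u + ereal (v \<bullet> (z - u)) + ereal (\<rho>h / 2 * (norm (z - u))\<^sup>2))"
    and hdiff: "\<exists>H :: 'a \<Rightarrow> real. \<exists>G :: 'a \<Rightarrow> 'a. (\<forall>u. h u = ereal (H u)) \<and>
        (\<forall>u. (H has_derivative (\<lambda>v. G u \<bullet> v)) (at u)) \<and> locally_lipschitz_fun G"
    and flim: "(\<lambda>k. dcf g h (x k)) \<longlonglongrightarrow> ereal fstar"
    and KL: "M > 0" "0 \<le> \<theta>" "\<theta> < 1" "\<eta> > 0"
      "\<exists>U. open U \<and> cluster_points x \<subseteq> U \<and> U \<subseteq> V"
      "\<forall>u\<in>V. let \<Psi> = (\<lambda>z. dcf g h z + indicator_ext C z - ereal fstar) in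
          (0 < \<Psi> u \<and> \<Psi> u < \<eta> \<longrightarrow>
            ereal (M * (1 - \<theta>) * (real_of_ereal (\<Psi> u)) powr (- \<theta>)) * dist0 (limiting_subdiff \<Psi> u) \<ge> 1)"
  shows "(\<theta> = 0 \<longrightarrow> (\<forall>\<^sub>F k in sequentially. dcf g h (x k) = ereal fstar))
    \<and> (0 < \<theta> \<and> \<theta> \<le> 1/2 \<longrightarrow> (\<exists>q. 0 < q \<and> q < 1 \<and>
          (\<lambda>k. real_of_ereal (dcf g h (x k)) - fstar) \<in> O(\<lambda>k. q ^ k)))
    \<and> (1/2 < \<theta> \<and> \<theta> < 1 \<longrightarrow>
          (\<lambda>k. real_of_ereal (dcf g h (x k)) - fstar) \<in> O(\<lambda>k. real k powr (1 / (1 - 2 * \<theta>))))"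
proof -
  obtain H G where h: "\<And>u. h u = ereal (H u)" and der: "\<And>u. (H has_derivative (\<lambda>v. G u \<bullet> v)) (at u)"
    and loclip: "locally_lipschitz_fun G"
    using hdiff by blast
  have g: "\<And>z. g z \<noteq> -\<infinity>" using gG by (simp add: Gamma0_def proper_fun_def)
  define r where "r = (\<lambda>k. real_of_ereal (dcf g h (x k)) - fstar)"
  obtain A N where A: "A > 0" and r_lim: "r \<longlonglongrightarrow> 0"
    and dcf_r: "\<And>k. k \<ge> N \<Longrightarrow> dcf g h (x k) = ereal (fstar + r k)"
    and nonneg: "\<And>k. k \<ge> N \<Longrightarrow> 0 \<le> r k"
    and recursion: "\<And>k. k \<ge> N \<Longrightarrow> r (Suc k) powr (2 * \<theta>) \<le> A * (r k - r (Suc k))"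
    using dca_kl_recursion[OF g h der loclip dca bdd(1) flim KL(1,3-6) r_def] by blast
  note rate_lemmas = kl_recursion_eventually_zero kl_recursion_geometric kl_recursion_sublinear
  note rates = rate_lemmas[where r = r and A = A and \<theta> = \<theta> and N = N]
  have "\<forall>\<^sub>F k in sequentially. dcf g h (x k) = ereal fstar" if "\<theta> = 0"
  proof -
    have "\<forall>\<^sub>F k in sequentially. r k = 0 \<and> k \<ge> N"
      using rates(1)[OF A nonneg recursion that r_lim] by (intro eventually_conj eventually_ge_at_top)
    then show ?thesis by eventually_elim (simp add: dcf_r)
  qed
  then show ?thesis
    unfolding r_def[symmetric]
    using rates(2)[OF A nonneg recursion _ r_lim] rates(3)[OF A nonneg recursion] by auto
qed

end
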